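(* Let $S'\le S$ be finite $p$-groups, $\mathcal{F}_1$ a fusion system over $S$, $\mathcal{F}_2,\mathcal{F}_e$ fusion systems over $S'$ with $\mathcal{F}_e\subseteq\mathcal{F}_1\cap\mathcal{F}_2$, $\mathcal{F}=\langle\mathcal{F}_1,\mathcal{F}_2\rangle_S$, $\Lambda=\{\mathcal{F}_1,\mathcal{F}_2,\mathcal{F}_e\}$, and $\mathcal{C}$ a family of subgroups of $S$ containing $S'$ and closed under $\mathcal{F}$-conjugation and overgroups. Let $P\in\mathcal{C}$ and assume that for every $Q\cong_{\mathcal{F}}P$, $\operatorname{Hom}_{\mathcal{F}_e}(Q,S')=\operatorname{Hom}_{\mathcal{F}_1}(Q,S')\cap\operatorname{Hom}_{\mathcal{F}_2}(Q,S')$, and that either (1) $\operatorname{Hom}_{\mathcal{F}}(P,S')=\operatorname{Hom}_{\mathcal{H}}(P,S')$ for some $\mathcal{H}\in\{\mathcal{F}_1,\mathcal{F}_2\}$, or (2) $\operatorname{Aut}_{\mathcal{F}}(P)=\operatorname{Aut}_{\mathcal{F}_2}(P)$ and, for every $Q$ with $Q\cong_{\mathcal{F}}P$ but $Q\not\cong_{\mathcal{F}_e}P$, $\operatorname{Hom}_{\mathcal{F}_e}(Q,S')=\operatorname{Hom}_{\mathcal{F}_2}(Q,S')$. Then the graph $\operatorname{Rep}_{\mathcal{F}}(P,\Lambda)$ is a tree. In particular $H_1(\operatorname{Rep}_{\mathcal{F}}(P,\Lambda);\mathcal{R})=0$ for every commutative ring $\mathcal{R}$.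
   Context: $\langle\mathcal{F}_1,\mathcal{F}_2\rangle_S$ is the smallest fusion system over $S$ containing both. For a fusion system $\mathcal{H}$ over $S_{\mathcal{H}}$ ($S_{\mathcal{F}_1}=S$, $S_{\mathcal{F}_2}=S_{\mathcal{F}_e}=S'$), $\operatorname{Rep}_{\mathcal{F}}(P,\mathcal{H})=\operatorname{Hom}_{\mathcal{F}}(P,S_{\mathcal{H}})/\sim$ where $\varphi\sim\psi$ iff there is an $\mathcal{H}$-isomorphism $\theta:\varphi(P)\to\psi(P)$ with $\theta\varphi=\psi$. $\operatorname{Rep}_{\mathcal{F}}(P,\Lambda)$ is the bipartite graph with vertex set $\operatorname{Rep}_{\mathcal{F}}(P,\mathcal{F}_1)\sqcup\operatorname{Rep}_{\mathcal{F}}(P,\mathcal{F}_2)$ and edge set $\operatorname{Rep}_{\mathcal{F}}(P,\mathcal{F}_e)$, the edge $[\varphi]_{\mathcal{F}_e}$ joining $[\varphi]_{\mathcal{F}_2}$ and $[\iota_{S'}^S\varphi]_{\mathcal{F}_1}$. *)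

theory Defs
  imports "HOL-Algebra.Group" "HOL-Library.FuncSet" "HOL-Computational_Algebra.Primes"
begin

text \<open>A morphism of a fusion system is represented as a pair (P, phi) where P is the
  domain (a subgroup of the ambient group G contained in S) and phi is an injective group
  homomorphism on P, extensional outside P.  The codomain is left implicit: phi belongs to
  Hom(P,Q) for every Q containing the image phi(P).\<close>

definition conjmap :: "('a, 'b) monoid_scheme \<Rightarrow> 'a \<Rightarrow> 'a set \<Rightarrow> 'a \<Rightarrow> 'a" where
  "conjmap G s P = restrict (\<lambda>x. s \<otimes>\<^bsub>G\<^esub> x \<otimes>\<^bsub>G\<^esub> inv\<^bsub>G\<^esub> s) P"

definition fusion_system ::
  "('a, 'b) monoid_scheme \<Rightarrow> 'a set \<Rightarrow> ('a set \<times> ('a \<Rightarrow> 'a)) set \<Rightarrow> bool" where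
  "fusion_system G S F \<longleftrightarrow>
     (\<forall>(P, \<phi>) \<in> F. subgroup P G \<and> P \<subseteq> S \<and> \<phi> \<in> hom (G\<lparr>carrier := P\<rparr>) G
                     \<and> \<phi> ` P \<subseteq> S \<and> inj_on \<phi> P \<and> \<phi> \<in> extensional P)
   \<and> (\<forall>P s. subgroup P G \<and> P \<subseteq> S \<and> s \<in> S \<longrightarrow> (P, conjmap G s P) \<in> F)
   \<and> (\<forall>P \<phi> Q \<psi>. (P, \<phi>) \<in> F \<and> (Q, \<psi>) \<in> F \<and> \<phi> ` P \<subseteq> Q \<longrightarrow> (P, compose P \<psi> \<phi>) \<in> F)
   \<and> (\<forall>P \<phi>. (P, \<phi>) \<in> F \<longrightarrow> (\<phi> ` P, restrict (inv_into P \<phi>) (\<phi> ` P)) \<in> F)"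

definition fusion_gen ::
  "('a, 'b) monoid_scheme \<Rightarrow> 'a set \<Rightarrow> ('a set \<times> ('a \<Rightarrow> 'a)) set
     \<Rightarrow> ('a set \<times> ('a \<Rightarrow> 'a)) set \<Rightarrow> ('a set \<times> ('a \<Rightarrow> 'a)) set" where
  "fusion_gen G S F1 F2 = \<Inter> {F. fusion_system G S F \<and> F1 \<subseteq> F \<and> F2 \<subseteq> F}"

definition Hom_fs :: "('a set \<times> ('a \<Rightarrow> 'a)) set \<Rightarrow> 'a set \<Rightarrow> 'a set \<Rightarrow> ('a \<Rightarrow> 'a) set" where
  "Hom_fs F P Q = {\<phi>. (P, \<phi>) \<in> F \<and> \<phi> ` P \<subseteq> Q}"

definition Aut_fs :: "('a set \<times> ('a \<Rightarrow> 'a)) set \<Rightarrow> 'a set \<Rightarrow> ('a \<Rightarrow> 'a) set" where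
  "Aut_fs F P = {\<phi>. (P, \<phi>) \<in> F \<and> \<phi> ` P = P}"

definition fs_conj :: "('a set \<times> ('a \<Rightarrow> 'a)) set \<Rightarrow> 'a set \<Rightarrow> 'a set \<Rightarrow> bool" where
  "fs_conj F P Q \<longleftrightarrow> (\<exists>\<phi>. (P, \<phi>) \<in> F \<and> \<phi> ` P = Q)"

definition rep_rel :: "('a set \<times> ('a \<Rightarrow> 'a)) set \<Rightarrow> 'a set \<Rightarrow> ('a \<Rightarrow> 'a) \<Rightarrow> ('a \<Rightarrow> 'a) \<Rightarrow> bool" where
  "rep_rel H P \<phi> \<psi> \<longleftrightarrow>
     (\<exists>\<theta>. (\<phi> ` P, \<theta>) \<in> H \<and> \<theta> ` (\<phi> ` P) = \<psi> ` P \<and> compose P \<theta> \<phi> = \<psi>)"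

text \<open>The class [phi]_H in Rep_F(P,H) = Hom_F(P,S_H)/~.\<close>
definition rep_class ::
  "('a set \<times> ('a \<Rightarrow> 'a)) set \<Rightarrow> ('a set \<times> ('a \<Rightarrow> 'a)) set \<Rightarrow> 'a set \<Rightarrow> 'a set
     \<Rightarrow> ('a \<Rightarrow> 'a) \<Rightarrow> ('a \<Rightarrow> 'a) set" where
  "rep_class F H SH P \<phi> = {\<psi> \<in> Hom_fs F P SH. rep_rel H P \<phi> \<psi>}"

definition Rep_fs ::
  "('a set \<times> ('a \<Rightarrow> 'a)) set \<Rightarrow> ('a set \<times> ('a \<Rightarrow> 'a)) set \<Rightarrow> 'a set \<Rightarrow> 'a set
     \<Rightarrow> ('a \<Rightarrow> 'a) set set" where
  "Rep_fs F H SH P = rep_class F H SH P ` Hom_fs F P SH"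

text \<open>Vertices: Rep_F(P,F1) (tagged Inl) disjoint union Rep_F(P,F2) (tagged Inr);
  edges: Rep_F(P,Fe); the edge [phi]_Fe joins [phi]_F2 (source) and [iota phi]_F1 (target).\<close>
definition RepLam_V ::
  "('a set \<times> ('a \<Rightarrow> 'a)) set \<Rightarrow> ('a set \<times> ('a \<Rightarrow> 'a)) set \<Rightarrow> ('a set \<times> ('a \<Rightarrow> 'a)) set
     \<Rightarrow> 'a set \<Rightarrow> 'a set \<Rightarrow> 'a set \<Rightarrow> (('a \<Rightarrow> 'a) set + ('a \<Rightarrow> 'a) set) set" where
  "RepLam_V F F1 F2 S S' P = Inl ` Rep_fs F F1 S P \<union> Inr ` Rep_fs F F2 S' P"

definition RepLam_E ::
  "('a set \<times> ('a \<Rightarrow> 'a)) set \<Rightarrow> ('a set \<times> ('a \<Rightarrow> 'a)) set \<Rightarrow> 'a set \<Rightarrow> 'a set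
     \<Rightarrow> ('a \<Rightarrow> 'a) set set" where
  "RepLam_E F Fe S' P = Rep_fs F Fe S' P"

definition RepLam_src ::
  "('a set \<times> ('a \<Rightarrow> 'a)) set \<Rightarrow> ('a set \<times> ('a \<Rightarrow> 'a)) set \<Rightarrow> 'a set \<Rightarrow> 'a set
     \<Rightarrow> ('a \<Rightarrow> 'a) set \<Rightarrow> ('a \<Rightarrow> 'a) set + ('a \<Rightarrow> 'a) set" where
  "RepLam_src F F2 S' P c = Inr (rep_class F F2 S' P (SOME \<phi>. \<phi> \<in> c))"

definition RepLam_tgt ::
  "('a set \<times> ('a \<Rightarrow> 'a)) set \<Rightarrow> ('a set \<times> ('a \<Rightarrow> 'a)) set \<Rightarrow> 'a set \<Rightarrow> 'a set
     \<Rightarrow> ('a \<Rightarrow> 'a) set \<Rightarrow> ('a \<Rightarrow> 'a) set + ('a \<Rightarrow> 'a) set" where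
  "RepLam_tgt F F1 S P c = Inl (rep_class F F1 S P (SOME \<phi>. \<phi> \<in> c))"

definition graph_connected :: "'v set \<Rightarrow> 'e set \<Rightarrow> ('e \<Rightarrow> 'v) \<Rightarrow> ('e \<Rightarrow> 'v) \<Rightarrow> bool" where
  "graph_connected V E src tgt \<longleftrightarrow> V \<noteq> {} \<and>
     (\<forall>u\<in>V. \<forall>w\<in>V. (u, w) \<in> ({(src e, tgt e) | e. e \<in> E} \<union> {(tgt e, src e) | e. e \<in> E})\<^sup>*)"

definition graph_has_cycle :: "'v set \<Rightarrow> 'e set \<Rightarrow> ('e \<Rightarrow> 'v) \<Rightarrow> ('e \<Rightarrow> 'v) \<Rightarrow> bool" where
  "graph_has_cycle V E src tgt \<longleftrightarrow>
     (\<exists>es vs. es \<noteq> [] \<and> length vs = length es \<and> distinct es \<and> distinct vs \<and> set es \<subseteq> E \<and>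
        (\<forall>i < length es. {src (es ! i), tgt (es ! i)} = {vs ! i, vs ! ((i + 1) mod length es)}))"

definition graph_is_tree :: "'v set \<Rightarrow> 'e set \<Rightarrow> ('e \<Rightarrow> 'v) \<Rightarrow> ('e \<Rightarrow> 'v) \<Rightarrow> bool" where
  "graph_is_tree V E src tgt \<longleftrightarrow> graph_connected V E src tgt \<and> \<not> graph_has_cycle V E src tgt"

text \<open>1-cycles with coefficients in a commutative ring: chains z on E (zero off E) with
  boundary zero.  For a graph (no 2-cells) H_1 equals this module.\<close>
definition graph_Z1 :: "'v set \<Rightarrow> 'e set \<Rightarrow> ('e \<Rightarrow> 'v) \<Rightarrow> ('e \<Rightarrow> 'v) \<Rightarrow> ('e \<Rightarrow> 'r::comm_ring_1) set" where
  "graph_Z1 V E src tgt = {z. (\<forall>e. e \<notin> E \<longrightarrow> z e = 0) \<and>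
     (\<forall>v\<in>V. (\<Sum>e\<in>{e\<in>E. tgt e = v}. z e) - (\<Sum>e\<in>{e\<in>E. src e = v}. z e) = 0)}"

definition graph_H1_zero :: "'v set \<Rightarrow> 'e set \<Rightarrow> ('e \<Rightarrow> 'v) \<Rightarrow> ('e \<Rightarrow> 'v) \<Rightarrow> 'r::comm_ring_1 itself \<Rightarrow> bool" where
  "graph_H1_zero V E src tgt R \<longleftrightarrow> graph_Z1 V E src tgt = {(\<lambda>e. 0 :: 'r)}"

end

theory Submission
  imports Defs
begin

text \<open>
  Connectedness: call an \<open>F\<close>-morphism \<open>\<chi>\<close> linking if for every \<open>\<phi> : P \<rightarrow> dom \<chi>\<close> in \<open>F\<close>
  the \<open>F1\<close>-classes of \<open>\<phi>\<close> and \<open>\<chi>\<phi>\<close> lie in one component.  Morphisms of \<open>F1\<close> keep the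
  \<open>F1\<close>-class, and a morphism of \<open>F2\<close> moves it along two edges through the common
  \<open>F2\<close>-vertex; since the linking morphisms form a fusion system over \<open>S\<close>, they are all of \<open>F\<close>,
  so every vertex is joined to the class of the identity.

  Acyclicity: two edges with the same ends are related by a single isomorphism lying in
  \<open>F1\<close> and in \<open>F2\<close>, hence in \<open>Fe\<close>, so there are no multiple edges.  Hypothesis (1) or (2)
  yields a hub \<open>h\<close> such that every edge contains \<open>h\<close> or has an end of degree one: in case (1)
  every edge meets the class of the identity; in case (2) an edge \<open>[\<psi>]\<close> meets \<open>[id]\<^sub>F\<^sub>2\<close>
  when \<open>\<psi>(P)\<close> is \<open>Fe\<close>-conjugate to \<open>P\<close> (then \<open>\<psi> \<in> F2\<close>, as \<open>Aut\<^sub>F(P) = Aut\<^sub>F\<^sub>2(P)\<close>),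
  and otherwise its \<open>F2\<close>-end is a leaf.  A bipartite graph of this shape without multiple
  edges has no cycles and no nonzero 1-cycles.
\<close>

section \<open>Fusion systems\<close>

lemma fusion_systemD:
  assumes "fusion_system G S F" and "(P, \<phi>) \<in> F"
  shows "subgroup P G" "P \<subseteq> S" "\<phi> \<in> hom (G\<lparr>carrier := P\<rparr>) G" "\<phi> ` P \<subseteq> S"
    "inj_on \<phi> P" "\<phi> \<in> extensional P"
  using bspec[OF conjunct1[OF assms(1)[unfolded fusion_system_def]] assms(2)] by simp_all

lemma fusion_system_conjmap:
  assumes "fusion_system G S F" "subgroup P G" "P \<subseteq> S" "s \<in> S"
  shows "(P, conjmap G s P) \<in> F"
  using assms unfolding fusion_system_def by blast

lemma fusion_system_compose:
  assumes "fusion_system G S F" "(P, \<phi>) \<in> F" "(Q, \<psi>) \<in> F" "\<phi> ` P \<subseteq> Q"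
  shows "(P, compose P \<psi> \<phi>) \<in> F"
  using assms unfolding fusion_system_def by blast

lemma fusion_system_inv:
  assumes "fusion_system G S F" "(P, \<phi>) \<in> F"
  shows "(\<phi> ` P, restrict (inv_into P \<phi>) (\<phi> ` P)) \<in> F"
  using assms unfolding fusion_system_def by blast

lemma fusion_system_image_subgroup:
  assumes "fusion_system G S F" "(P, \<phi>) \<in> F"
  shows "subgroup (\<phi> ` P) G"
  using fusion_systemD(1)[OF assms(1) fusion_system_inv[OF assms]] .

lemma fusion_system_id:
  assumes "fusion_system G S F" "group G" "subgroup S G" "subgroup P G" "P \<subseteq> S"
  shows "(P, restrict (\<lambda>x. x) P) \<in> F"
proof -
  interpret group G by fact
  have "conjmap G \<one>\<^bsub>G\<^esub> P = restrict (\<lambda>x. x) P"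
    unfolding conjmap_def using assms(4) by (intro restrict_ext) (simp add: subgroup.mem_carrier)
  then show ?thesis
    using fusion_system_conjmap[OF assms(1,4,5) subgroup.one_closed[OF assms(3)]] by simp
qed

lemma (in group) conjmap_hom:
  assumes "subgroup P G" "s \<in> carrier G"
  shows "conjmap G s P \<in> hom (G\<lparr>carrier := P\<rparr>) G"
proof (rule homI)
  have cancel: "inv s \<otimes> (s \<otimes> z) = z" if "z \<in> carrier G" for z
    using assms(2) that by (simp add: m_assoc[symmetric])
  fix x y assume "x \<in> carrier (G\<lparr>carrier := P\<rparr>)" "y \<in> carrier (G\<lparr>carrier := P\<rparr>)"
  with assms cancel
  show "conjmap G s P (x \<otimes>\<^bsub>G\<lparr>carrier := P\<rparr>\<^esub> y) = conjmap G s P x \<otimes> conjmap G s P y"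
    by (simp add: conjmap_def subgroup.m_closed subgroup.mem_carrier m_assoc)
qed (use assms in \<open>auto simp: conjmap_def subgroup.mem_carrier\<close>)

lemma (in group) conjmap_inj:
  assumes "subgroup P G" "s \<in> carrier G"
  shows "inj_on (conjmap G s P) P"
  using assms by (auto intro!: inj_onI simp: conjmap_def subgroup.mem_carrier)

lemma (in group) conjmap_image:
  assumes "subgroup S G" "P \<subseteq> S" "s \<in> S"
  shows "conjmap G s P ` P \<subseteq> S"
  using assms by (auto simp: conjmap_def subgroup.m_closed subgroup.m_inv_closed)

lemma compose_hom_subgroup:
  assumes "subgroup P G" "\<phi> \<in> hom (G\<lparr>carrier := P\<rparr>) G" "\<psi> \<in> hom (G\<lparr>carrier := Q\<rparr>) G"
    "\<phi> ` P \<subseteq> Q"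
  shows "compose P \<psi> \<phi> \<in> hom (G\<lparr>carrier := P\<rparr>) G"
  using assms by (auto simp: hom_def compose_def subgroup.m_closed image_subset_iff)

lemma inv_into_hom_subgroup:
  assumes "subgroup P G" "\<phi> \<in> hom (G\<lparr>carrier := P\<rparr>) G" "inj_on \<phi> P"
  shows "restrict (inv_into P \<phi>) (\<phi> ` P) \<in> hom (G\<lparr>carrier := \<phi> ` P\<rparr>) G"
proof (rule homI)
  fix u v assume "u \<in> carrier (G\<lparr>carrier := \<phi> ` P\<rparr>)" "v \<in> carrier (G\<lparr>carrier := \<phi> ` P\<rparr>)"
  then obtain a b where ab: "a \<in> P" "b \<in> P" "u = \<phi> a" "v = \<phi> b" by auto
  then have "u \<otimes>\<^bsub>G\<^esub> v = \<phi> (a \<otimes>\<^bsub>G\<^esub> b)" "a \<otimes>\<^bsub>G\<^esub> b \<in> P"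
    using assms(1,2) by (auto simp: hom_def subgroup.m_closed)
  with ab assms(3) show "restrict (inv_into P \<phi>) (\<phi> ` P) (u \<otimes>\<^bsub>G\<lparr>carrier := \<phi> ` P\<rparr>\<^esub> v) =
      restrict (inv_into P \<phi>) (\<phi> ` P) u \<otimes>\<^bsub>G\<^esub> restrict (inv_into P \<phi>) (\<phi> ` P) v"
    by simp
qed (use assms(1) in \<open>auto simp: inv_into_into subgroup.mem_carrier\<close>)

definition universal_fusion_system ::
  "('a, 'b) monoid_scheme \<Rightarrow> 'a set \<Rightarrow> ('a set \<times> ('a \<Rightarrow> 'a)) set" where
  "universal_fusion_system G S =
     {(P, \<phi>). subgroup P G \<and> P \<subseteq> S \<and> \<phi> \<in> hom (G\<lparr>carrier := P\<rparr>) G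
             \<and> \<phi> ` P \<subseteq> S \<and> inj_on \<phi> P \<and> \<phi> \<in> extensional P}"

lemma (in group) fusion_system_universal:
  assumes S: "subgroup S G"
  shows "fusion_system G S (universal_fusion_system G S)"
  unfolding fusion_system_def
proof (intro conjI allI impI)
  fix P s assume Ps: "subgroup P G \<and> P \<subseteq> S \<and> s \<in> S"
  then have "s \<in> carrier G" using subgroup.mem_carrier[OF S] by blast
  with Ps S show "(P, conjmap G s P) \<in> universal_fusion_system G S"
    by (simp add: universal_fusion_system_def conjmap_hom conjmap_inj conjmap_image)
      (simp add: conjmap_def)
next
  fix P \<phi> Q \<psi>
  assume "(P, \<phi>) \<in> universal_fusion_system G S \<and> (Q, \<psi>) \<in> universal_fusion_system G S \<and> \<phi> ` P \<subseteq> Q"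
  then show "(P, compose P \<psi> \<phi>) \<in> universal_fusion_system G S"
    by (auto simp: universal_fusion_system_def compose_hom_subgroup compose_eq inj_on_def
        image_subset_iff)
next
  fix P \<phi> assume "(P, \<phi>) \<in> universal_fusion_system G S"
  then have "subgroup P G" "P \<subseteq> S" "\<phi> \<in> hom (G\<lparr>carrier := P\<rparr>) G" "inj_on \<phi> P"
    by (auto simp: universal_fusion_system_def)
  moreover from this have "subgroup (\<phi> ` P) G" "\<phi> ` P \<subseteq> S"
    using group_hom.img_is_subgroup[of "G\<lparr>carrier := P\<rparr>" G \<phi>] \<open>(P, \<phi>) \<in> _\<close>
    by (auto simp: group_hom_def group_hom_axioms_def subgroup.subgroup_is_group
        universal_fusion_system_def)
  ultimately show "(\<phi> ` P, restrict (inv_into P \<phi>) (\<phi> ` P)) \<in> universal_fusion_system G S"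
    by (auto simp: universal_fusion_system_def inv_into_hom_subgroup inv_into_into inj_on_def)
qed (auto simp: universal_fusion_system_def)

lemma fusion_system_subset_universal:
  assumes "fusion_system G T F" "T \<subseteq> S"
  shows "F \<subseteq> universal_fusion_system G S"
proof clarify
  fix P \<phi> assume "(P, \<phi>) \<in> F"
  with fusion_systemD[OF assms(1) this] assms(2) show "(P, \<phi>) \<in> universal_fusion_system G S"
    by (auto simp: universal_fusion_system_def)
qed

lemma fusion_system_Inter:
  assumes "F0 \<in> \<A>" "\<And>F. F \<in> \<A> \<Longrightarrow> fusion_system G S F"
  shows "fusion_system G S (\<Inter>\<A>)"
  unfolding fusion_system_def[of G S "\<Inter>\<A>"]
proof (intro conjI allI impI ballI)
  fix x assume "x \<in> \<Inter>\<A>"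
  then obtain P \<phi> where "x = (P, \<phi>)" "(P, \<phi>) \<in> F0" using assms(1) by (cases x) blast
  with fusion_systemD[OF assms(2)[OF assms(1)] \<open>(P, \<phi>) \<in> F0\<close>]
  show "case x of (P, \<phi>) \<Rightarrow> subgroup P G \<and> P \<subseteq> S \<and> \<phi> \<in> hom (G\<lparr>carrier := P\<rparr>) G
          \<and> \<phi> ` P \<subseteq> S \<and> inj_on \<phi> P \<and> \<phi> \<in> extensional P" by simp
qed (use assms(2) in \<open>blast intro: fusion_system_conjmap fusion_system_compose fusion_system_inv\<close>)+

lemma fusion_gen_upper: "F1 \<subseteq> fusion_gen G S F1 F2" "F2 \<subseteq> fusion_gen G S F1 F2"
  unfolding fusion_gen_def by auto

lemma fusion_gen_least:
  "fusion_system G S F \<Longrightarrow> F1 \<subseteq> F \<Longrightarrow> F2 \<subseteq> F \<Longrightarrow> fusion_gen G S F1 F2 \<subseteq> F"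
  unfolding fusion_gen_def by auto

lemma fusion_system_fusion_gen:
  assumes "group G" "subgroup S G" "fusion_system G S F1" "fusion_system G S' F2" "S' \<subseteq> S"
  shows "fusion_system G S (fusion_gen G S F1 F2)"
  unfolding fusion_gen_def
proof (rule fusion_system_Inter)
  show "universal_fusion_system G S \<in> {F. fusion_system G S F \<and> F1 \<subseteq> F \<and> F2 \<subseteq> F}"
    using group.fusion_system_universal[OF assms(1,2)]
      fusion_system_subset_universal[OF assms(3) order_refl]
      fusion_system_subset_universal[OF assms(4,5)] by blast
qed simp

section \<open>The relation defining \<open>Rep\<^sub>F(P, H)\<close>\<close>

lemma rep_rel_refl:
  assumes "fusion_system G T H" "group G" "subgroup T G"
    and "subgroup (\<phi> ` P) G" "\<phi> ` P \<subseteq> T" "\<phi> \<in> extensional P"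
  shows "rep_rel H P \<phi> \<phi>"
  unfolding rep_rel_def
proof (intro exI conjI)
  show "(\<phi> ` P, restrict (\<lambda>x. x) (\<phi> ` P)) \<in> H" using fusion_system_id assms(1-5) .
  show "compose P (restrict (\<lambda>x. x) (\<phi> ` P)) \<phi> = \<phi>"
    using assms(6) by (auto simp: fun_eq_iff compose_def extensional_def)
qed auto

lemma rep_rel_id:
  assumes "fusion_system G T H" "(P, \<psi>) \<in> H"
  shows "rep_rel H P (restrict (\<lambda>x. x) P) \<psi>"
  unfolding rep_rel_def
proof (intro exI conjI)
  show "compose P \<psi> (restrict (\<lambda>x. x) P) = \<psi>"
    using fusion_systemD(6)[OF assms] by (auto simp: fun_eq_iff compose_def extensional_def)
qed (use assms(2) in auto)

lemma rep_rel_sym: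
  assumes H: "fusion_system G T H" and r: "rep_rel H P \<phi> \<psi>" and ext: "\<phi> \<in> extensional P"
  shows "rep_rel H P \<psi> \<phi>"
proof -
  obtain \<theta> where \<theta>: "(\<phi> ` P, \<theta>) \<in> H" "\<theta> ` \<phi> ` P = \<psi> ` P" "compose P \<theta> \<phi> = \<psi>"
    using r unfolding rep_rel_def by blast
  have inj: "inj_on \<theta> (\<phi> ` P)" using fusion_systemD(5)[OF H \<theta>(1)] .
  define \<theta>' where "\<theta>' = restrict (inv_into (\<phi> ` P) \<theta>) (\<psi> ` P)"
  have "(\<psi> ` P, \<theta>') \<in> H" using fusion_system_inv[OF H \<theta>(1)] \<theta>(2) unfolding \<theta>'_def by simp
  moreover have "\<theta>' ` \<psi> ` P = \<phi> ` P"
    unfolding \<theta>'_def \<theta>(2)[symmetric] using inj by (simp add: image_image)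
  moreover have "compose P \<theta>' \<psi> = \<phi>"
  proof
    fix x show "compose P \<theta>' \<psi> x = \<phi> x"
      using ext inj \<theta>(3)[symmetric]
      by (cases "x \<in> P") (auto simp: \<theta>'_def compose_def extensional_def)
  qed
  ultimately show ?thesis unfolding rep_rel_def by blast
qed

lemma rep_rel_trans:
  assumes H: "fusion_system G T H" and "rep_rel H P \<phi> \<psi>" "rep_rel H P \<psi> \<chi>"
  shows "rep_rel H P \<phi> \<chi>"
proof -
  obtain \<theta>1 where \<theta>1: "(\<phi> ` P, \<theta>1) \<in> H" "\<theta>1 ` \<phi> ` P = \<psi> ` P" "compose P \<theta>1 \<phi> = \<psi>"
    using assms(2) unfolding rep_rel_def by blast
  obtain \<theta>2 where \<theta>2: "(\<psi> ` P, \<theta>2) \<in> H" "\<theta>2 ` \<psi> ` P = \<chi> ` P" "compose P \<theta>2 \<psi> = \<chi>"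
    using assms(3) unfolding rep_rel_def by blast
  have "(\<phi> ` P, compose (\<phi> ` P) \<theta>2 \<theta>1) \<in> H"
    using fusion_system_compose[OF H \<theta>1(1) \<theta>2(1)] \<theta>1(2) by simp
  moreover have "compose (\<phi> ` P) \<theta>2 \<theta>1 ` \<phi> ` P = \<theta>2 ` \<theta>1 ` \<phi> ` P"
    by (simp add: compose_eq image_image cong: image_cong)
  then have "compose (\<phi> ` P) \<theta>2 \<theta>1 ` \<phi> ` P = \<chi> ` P"
    using \<theta>1(2) \<theta>2(2) by simp
  moreover have "compose P (compose (\<phi> ` P) \<theta>2 \<theta>1) \<phi> = compose P \<theta>2 (compose P \<theta>1 \<phi>)"
    by (auto simp: fun_eq_iff compose_def)
  then have "compose P (compose (\<phi> ` P) \<theta>2 \<theta>1) \<phi> = \<chi>"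
    using \<theta>1(3) \<theta>2(3) by simp
  ultimately show ?thesis unfolding rep_rel_def by blast
qed

lemma rep_rel_mono: "H \<subseteq> H' \<Longrightarrow> rep_rel H P \<phi> \<psi> \<Longrightarrow> rep_rel H' P \<phi> \<psi>"
  unfolding rep_rel_def by blast

lemma rep_rel_postcompose:
  assumes H: "fusion_system G T H" "group G" "subgroup T G"
    and \<chi>: "(Q, \<chi>) \<in> H" and "\<phi> ` P \<subseteq> Q" "subgroup (\<phi> ` P) G"
  shows "rep_rel H P \<phi> (compose P \<chi> \<phi>)"
  unfolding rep_rel_def
proof (intro exI conjI)
  let ?\<iota> = "restrict (\<lambda>x. x) (\<phi> ` P)"
  have "\<phi> ` P \<subseteq> T" using assms(5) fusion_systemD(2)[OF H(1) \<chi>] by blast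
  then have "(\<phi> ` P, ?\<iota>) \<in> H" using fusion_system_id H assms(6) by blast
  then show "(\<phi> ` P, compose (\<phi> ` P) \<chi> ?\<iota>) \<in> H"
    using fusion_system_compose[OF H(1) _ \<chi>] assms(5) by simp
  show "compose (\<phi> ` P) \<chi> ?\<iota> ` \<phi> ` P = compose P \<chi> \<phi> ` P"
    by (auto simp: compose_eq image_iff)
  show "compose P (compose (\<phi> ` P) \<chi> ?\<iota>) \<phi> = compose P \<chi> \<phi>"
    by (auto simp: fun_eq_iff compose_def)
qed

lemma rep_class_eq:
  assumes "fusion_system G T H" "rep_rel H P \<phi> \<psi>" "\<phi> \<in> extensional P"
  shows "rep_class F H T' P \<phi> = rep_class F H T' P \<psi>"
  unfolding rep_class_def using rep_rel_trans[OF assms(1)] rep_rel_sym[OF assms] assms(2) by blast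

lemma rep_rel_if_rep_class_eq:
  assumes "\<psi> \<in> Hom_fs F P T" "rep_rel H P \<psi> \<psi>" "rep_class F H T P \<phi> = rep_class F H T P \<psi>"
  shows "rep_rel H P \<phi> \<psi>"
  using assms unfolding rep_class_def by blast

section \<open>Bipartite graphs with a hub\<close>

definition graph_adj :: "'e set \<Rightarrow> ('e \<Rightarrow> 'v) \<Rightarrow> ('e \<Rightarrow> 'v) \<Rightarrow> ('v \<times> 'v) set" where
  "graph_adj E src tgt = {(src e, tgt e) | e. e \<in> E} \<union> {(tgt e, src e) | e. e \<in> E}"

lemma graph_adjI:
  "e \<in> E \<Longrightarrow> (src e, tgt e) \<in> graph_adj E src tgt"
  "e \<in> E \<Longrightarrow> (tgt e, src e) \<in> graph_adj E src tgt"
  unfolding graph_adj_def by blast+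

lemma sym_graph_adj_rtrancl: "sym ((graph_adj E src tgt)\<^sup>*)"
  by (rule sym_rtrancl) (auto simp: sym_def graph_adj_def)

lemma graph_connectedI:
  assumes "r \<in> V" "\<And>v. v \<in> V \<Longrightarrow> (r, v) \<in> (graph_adj E src tgt)\<^sup>*"
  shows "graph_connected V E src tgt"
proof -
  have "(u, v) \<in> (graph_adj E src tgt)\<^sup>*" if "u \<in> V" "v \<in> V" for u v
    using assms(2)[OF that(1)] assms(2)[OF that(2)] sym_graph_adj_rtrancl
    by (meson rtrancl_trans symD)
  then show ?thesis using assms(1) unfolding graph_connected_def graph_adj_def by blast
qed

definition leaf_edge :: "'e set \<Rightarrow> ('e \<Rightarrow> 'v) \<Rightarrow> ('e \<Rightarrow> 'v) \<Rightarrow> 'e \<Rightarrow> bool" where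
  "leaf_edge E src tgt e \<longleftrightarrow> (\<exists>w \<in> {src e, tgt e}. \<forall>e' \<in> E. w \<in> {src e', tgt e'} \<longrightarrow> e' = e)"

lemma cycle_edge_not_leaf:
  assumes "length vs = length es" "distinct es" "set es \<subseteq> E" "2 \<le> length es"
    and cyc: "\<And>i. i < length es \<Longrightarrow>
                {src (es ! i), tgt (es ! i)} = {vs ! i, vs ! ((i + 1) mod length es)}"
    and i: "i < length es"
  shows "\<not> leaf_edge E src tgt (es ! i)"
proof
  define n where "n = length es"
  have "0 < n" using i unfolding n_def by linarith
  have succ_ne: "(k + 1) mod n \<noteq> k" if "k < n" for k
  proof (cases "k + 1 < n")
    case False
    with that have "k + 1 = n" by simp
    with assms(4) show ?thesis unfolding n_def by auto
  qed simp
  assume "leaf_edge E src tgt (es ! i)"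
  then obtain w where w: "w \<in> {vs ! i, vs ! ((i + 1) mod n)}"
    and only: "\<forall>e' \<in> E. w \<in> {src e', tgt e'} \<longrightarrow> e' = es ! i"
    using cyc[OF i] unfolding leaf_edge_def n_def by auto
  obtain j where j: "j < n" "j \<noteq> i" "w \<in> {src (es ! j), tgt (es ! j)}"
  proof (cases "w = vs ! i")
    case True
    define j where "j = (i + n - 1) mod n"
    have "(j + 1) mod n = (i + n - 1 + 1) mod n" unfolding j_def by (rule mod_add_left_eq)
    also have "i + n - 1 + 1 = i + n" using i unfolding n_def by simp
    also have "(i + n) mod n = i" using i unfolding n_def by simp
    finally have "(j + 1) mod n = i" .
    moreover have "j < n" unfolding j_def using \<open>0 < n\<close> by simp
    ultimately show ?thesis using that[of j] cyc[of j] succ_ne[of j] True unfolding n_def by auto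
  next
    case False
    then show ?thesis
      using that[of "(i + 1) mod n"] cyc[of "(i + 1) mod n"] succ_ne[of i] w i \<open>0 < n\<close>
      unfolding n_def
      by auto
  qed
  moreover have "es ! j \<in> E" using j(1) assms(3) unfolding n_def by (meson nth_mem subsetD)
  ultimately have "es ! j = es ! i" using only by blast
  with assms(2) j i show False unfolding n_def by (simp add: nth_eq_iff_index_eq)
qed

locale simple_bipartite_graph =
  fixes V :: "'v set" and E :: "'e set" and src tgt :: "'e \<Rightarrow> 'v"
  assumes finite_E: "finite E"
    and ends_in_V: "e \<in> E \<Longrightarrow> src e \<in> V \<and> tgt e \<in> V"
    and src_ne_tgt: "e \<in> E \<Longrightarrow> e' \<in> E \<Longrightarrow> src e \<noteq> tgt e'"
    and edge_eqI: "e \<in> E \<Longrightarrow> e' \<in> E \<Longrightarrow> src e = src e' \<Longrightarrow> tgt e = tgt e' \<Longrightarrow> e = e'"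
begin

lemma edge_eq_if_same_ends:
  "e \<in> E \<Longrightarrow> e' \<in> E \<Longrightarrow> {src e, tgt e} = {src e', tgt e'} \<Longrightarrow> e = e'"
  using src_ne_tgt edge_eqI by (metis doubleton_eq_iff)

lemma cycle_length_ge_3:
  assumes "length vs = length es" "distinct es" "es \<noteq> []" "set es \<subseteq> E"
    and cyc: "\<And>i. i < length es \<Longrightarrow>
                {src (es ! i), tgt (es ! i)} = {vs ! i, vs ! ((i + 1) mod length es)}"
  shows "3 \<le> length es"
proof -
  have edge: "es ! i \<in> E" if "i < length es" for i using that assms(4) by auto
  have "length es \<noteq> 1"
  proof
    assume "length es = 1"
    then have "src (es ! 0) = tgt (es ! 0)" using cyc[of 0] by auto
    with src_ne_tgt edge[of 0] \<open>length es = 1\<close> show False by simp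
  qed
  moreover have "length es \<noteq> 2"
  proof
    assume "length es = 2"
    then have "{src (es ! 0), tgt (es ! 0)} = {src (es ! 1), tgt (es ! 1)}"
      using cyc[of 0] cyc[of 1] by (simp add: insert_commute)
    then have "es ! 0 = es ! 1" using edge_eq_if_same_ends edge \<open>length es = 2\<close> by simp
    with assms(2) \<open>length es = 2\<close> show False by (simp add: nth_eq_iff_index_eq)
  qed
  moreover have "length es \<noteq> 0" using assms(3) by simp
  ultimately show ?thesis by linarith
qed

lemma Z1_zero_at_edge:
  assumes z: "z \<in> graph_Z1 V E src tgt" and e: "e \<in> E" and w: "w \<in> {src e, tgt e}"
    and others: "\<And>e'. e' \<in> E \<Longrightarrow> e' \<noteq> e \<Longrightarrow> w \<in> {src e', tgt e'} \<Longrightarrow> z e' = 0"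
  shows "z e = 0"
proof -
  have "w \<in> V" using w e ends_in_V by blast
  then have boundary: "(\<Sum>e\<in>{e\<in>E. tgt e = w}. z e) - (\<Sum>e\<in>{e\<in>E. src e = w}. z e) = 0"
    using z unfolding graph_Z1_def by blast
  have single: "(\<Sum>e'\<in>A. z e') = z e" if "e \<in> A" "A \<subseteq> {e' \<in> E. w \<in> {src e', tgt e'}}" for A
  proof -
    have "A \<subseteq> E" using that(2) by blast
    then have "finite A" using finite_E by (rule finite_subset)
    then have "(\<Sum>e'\<in>A. z e') = z e + (\<Sum>e'\<in>A - {e}. z e')" using that(1) by (rule sum.remove)
    also have "(\<Sum>e'\<in>A - {e}. z e') = 0" using that(2) others by (intro sum.neutral) blast
    finally show ?thesis by simp
  qed
  consider "w = tgt e" | "w = src e" using w by blast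
  then show ?thesis
  proof cases
    case 1
    then have "{e' \<in> E. src e' = w} = {}" using src_ne_tgt[OF _ e] by auto
    then have "(\<Sum>e'\<in>{e' \<in> E. src e' = w}. z e') = 0" by (simp only: sum.empty)
    moreover have "(\<Sum>e'\<in>{e' \<in> E. tgt e' = w}. z e') = z e" using 1 e by (intro single) auto
    ultimately show ?thesis using boundary by simp
  next
    case 2
    then have "{e' \<in> E. tgt e' = w} = {}" using src_ne_tgt[OF e] by fastforce
    then have "(\<Sum>e'\<in>{e' \<in> E. tgt e' = w}. z e') = 0" by (simp only: sum.empty)
    moreover have "(\<Sum>e'\<in>{e' \<in> E. src e' = w}. z e') = z e" using 2 e by (intro single) auto
    ultimately show ?thesis using boundary by simp
  qed
qed

lemma Z1_zero_at_leaf_edge: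
  "z \<in> graph_Z1 V E src tgt \<Longrightarrow> e \<in> E \<Longrightarrow> leaf_edge E src tgt e \<Longrightarrow> z e = 0"
  unfolding leaf_edge_def using Z1_zero_at_edge by blast

end

locale hub_graph = simple_bipartite_graph +
  fixes hub :: 'v
  assumes at_hub_or_leaf: "e \<in> E \<Longrightarrow> hub \<in> {src e, tgt e} \<or> leaf_edge E src tgt e"
begin

lemma Z1_trivial: "graph_Z1 V E src tgt = {\<lambda>e. 0 :: 'r::comm_ring_1}"
proof (intro equalityI subsetI)
  fix z assume z: "z \<in> graph_Z1 V E src tgt"
  have "z e = 0" if e: "e \<in> E" for e
  proof (cases "leaf_edge E src tgt e")
    case False
    then obtain w where w: "{src e, tgt e} = {hub, w}" using at_hub_or_leaf e by blast
    have "hub \<noteq> w" using w src_ne_tgt[OF e e] by (metis doubleton_eq_iff insert_absorb2)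
    show ?thesis
    proof (rule Z1_zero_at_edge[OF z e])
      show "w \<in> {src e, tgt e}" using w by blast
      fix e' assume e': "e' \<in> E" "e' \<noteq> e" "w \<in> {src e', tgt e'}"
      have "hub \<notin> {src e', tgt e'}"
      proof
        assume "hub \<in> {src e', tgt e'}"
        with e'(3) \<open>hub \<noteq> w\<close> have "{src e', tgt e'} = {src e, tgt e}" unfolding w by auto
        with e e' edge_eq_if_same_ends show False by blast
      qed
      then show "z e' = 0" using at_hub_or_leaf[OF e'(1)] Z1_zero_at_leaf_edge[OF z e'(1)] by blast
    qed
  qed (use Z1_zero_at_leaf_edge[OF z e] in blast)
  moreover have "z e = 0" if "e \<notin> E" for e using z that unfolding graph_Z1_def by blast
  ultimately show "z \<in> {\<lambda>e. 0}" by auto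
qed (simp add: graph_Z1_def)

lemma no_cycle: "\<not> graph_has_cycle V E src tgt"
proof
  assume "graph_has_cycle V E src tgt"
  then obtain es vs where cycle: "es \<noteq> []" "length vs = length es" "distinct es" "distinct vs"
    "set es \<subseteq> E"
    and cyc: "\<And>i. i < length es \<Longrightarrow>
                {src (es ! i), tgt (es ! i)} = {vs ! i, vs ! ((i + 1) mod length es)}"
    unfolding graph_has_cycle_def by blast
  define n where "n = length es"
  have "3 \<le> n" using cycle_length_ge_3[OF cycle(2,3,1,5) cyc] unfolding n_def .
  have vs_ne: "vs ! i \<noteq> vs ! j" if "i < n" "j < n" "i \<noteq> j" for i j
    using that cycle(2,4) unfolding n_def by (simp add: nth_eq_iff_index_eq)
  have at_hub: "hub \<in> {vs ! i, vs ! ((i + 1) mod n)}" if "i < n" for i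
  proof -
    have "2 \<le> length es" using \<open>3 \<le> n\<close> unfolding n_def by simp
    with that have "\<not> leaf_edge E src tgt (es ! i)"
      using cycle_edge_not_leaf[OF cycle(2,3,5) _ cyc] unfolding n_def by blast
    moreover have "es ! i \<in> E" using that cycle(5) unfolding n_def by auto
    ultimately show ?thesis using at_hub_or_leaf cyc[of i] that unfolding n_def by auto
  qed
  from \<open>3 \<le> n\<close> have "1 < n" "2 < n" by simp_all
  have "hub \<in> {vs ! 0, vs ! 1}" using at_hub[of 0] \<open>3 \<le> n\<close> by simp
  moreover have "hub \<in> {vs ! 1, vs ! 2}"
    using at_hub[of 1] \<open>3 \<le> n\<close> by (simp add: numeral_2_eq_2)
  ultimately have "hub = vs ! 1" using vs_ne[of 0 2] \<open>2 < n\<close> by auto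
  moreover have "hub \<in> {vs ! 2, vs ! (3 mod n)}" using at_hub[of 2] \<open>3 \<le> n\<close> by simp
  moreover have "3 mod n \<noteq> 1" using \<open>3 \<le> n\<close> by (cases "n = 3") simp_all
  moreover have "3 mod n < n" using \<open>3 \<le> n\<close> by (intro mod_less_divisor) linarith
  ultimately show False using vs_ne[of 1 2] vs_ne[of 1 "3 mod n"] \<open>1 < n\<close> \<open>2 < n\<close> by auto
qed

end

section \<open>The graph \<open>Rep\<^sub>F(P, \<Lambda>)\<close>\<close>

lemma extensional_compose_cancel:
  assumes "\<theta>1 \<in> extensional (\<psi> ` P)" "\<theta>2 \<in> extensional (\<psi> ` P)"
    and "compose P \<theta>1 \<psi> = compose P \<theta>2 \<psi>"
  shows "\<theta>1 = \<theta>2"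
proof (rule extensionalityI[OF assms(1,2)])
  fix y assume "y \<in> \<psi> ` P"
  then obtain x where "x \<in> P" "y = \<psi> x" by blast
  with fun_cong[OF assms(3), of x] show "\<theta>1 y = \<theta>2 y" by (simp add: compose_eq)
qed

locale amalgam =
  fixes G :: "('a, 'b) monoid_scheme" and S S' P :: "'a set"
    and F1 F2 Fe :: "('a set \<times> ('a \<Rightarrow> 'a)) set"
  assumes group: "group G" and S_sub: "subgroup S G" and S_fin: "finite S"
    and S'_sub: "subgroup S' G" and S'_le: "S' \<subseteq> S"
    and F1_fs: "fusion_system G S F1" and F2_fs: "fusion_system G S' F2"
    and Fe_fs: "fusion_system G S' Fe" and Fe_le: "Fe \<subseteq> F1 \<inter> F2"
    and P_sub: "subgroup P G" and P_le: "P \<subseteq> S"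
begin

abbreviation "F \<equiv> fusion_gen G S F1 F2"
abbreviation "V \<equiv> RepLam_V F F1 F2 S S' P"
abbreviation "E \<equiv> RepLam_E F Fe S' P"
abbreviation "src \<equiv> RepLam_src F F2 S' P"
abbreviation "tgt \<equiv> RepLam_tgt F F1 S P"
abbreviation "idP \<equiv> restrict (\<lambda>x. x) P"

lemma F_fs: "fusion_system G S F"
  using fusion_system_fusion_gen[OF group S_sub F1_fs F2_fs S'_le] .

lemma F1_le_F: "F1 \<subseteq> F" and F2_le_F: "F2 \<subseteq> F"
  using fusion_gen_upper .

lemma Fe_le_F1: "Fe \<subseteq> F1" and Fe_le_F2: "Fe \<subseteq> F2"
  using Fe_le by auto

lemma F_morphismD:
  assumes "(P, \<phi>) \<in> F"
  shows "\<phi> \<in> extensional P" "subgroup (\<phi> ` P) G" "\<phi> ` P \<subseteq> S"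
  using fusion_systemD[OF F_fs assms] fusion_system_image_subgroup[OF F_fs assms] by auto

lemma idP_in_F: "(P, idP) \<in> F"
  using fusion_system_id[OF F_fs group S_sub P_sub P_le] .

definition edge_rep :: "('a \<Rightarrow> 'a) set \<Rightarrow> 'a \<Rightarrow> 'a" where
  "edge_rep c = (SOME \<phi>. \<phi> \<in> c)"

lemma src_eq: "src c = Inr (rep_class F F2 S' P (edge_rep c))"
  unfolding RepLam_src_def edge_rep_def ..

lemma tgt_eq: "tgt c = Inl (rep_class F F1 S P (edge_rep c))"
  unfolding RepLam_tgt_def edge_rep_def ..

lemma edge_rep:
  assumes "c \<in> E"
  shows "edge_rep c \<in> c" "edge_rep c \<in> Hom_fs F P S'" "c = rep_class F Fe S' P (edge_rep c)"
proof -
  obtain \<phi> where \<phi>: "\<phi> \<in> Hom_fs F P S'" "c = rep_class F Fe S' P \<phi>"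
    using assms unfolding RepLam_E_def Rep_fs_def by blast
  then have \<phi>F: "(P, \<phi>) \<in> F" "\<phi> ` P \<subseteq> S'" unfolding Hom_fs_def by simp_all
  then have "rep_rel Fe P \<phi> \<phi>"
    using rep_rel_refl[OF Fe_fs group S'_sub] F_morphismD by blast
  with \<phi> have "\<phi> \<in> c" unfolding rep_class_def by simp
  then show rep: "edge_rep c \<in> c" unfolding edge_rep_def by (rule someI[of "\<lambda>\<psi>. \<psi> \<in> c"])
  with \<phi>(2) show "edge_rep c \<in> Hom_fs F P S'" unfolding rep_class_def by simp
  from rep \<phi>(2) have "rep_rel Fe P \<phi> (edge_rep c)" unfolding rep_class_def by simp
  with \<phi>(2) show "c = rep_class F Fe S' P (edge_rep c)"
    using rep_class_eq[OF Fe_fs _ F_morphismD(1)[OF \<phi>F(1)]] by simp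
qed

lemma edge_ends:
  assumes "\<phi> \<in> Hom_fs F P S'"
  shows "rep_class F Fe S' P \<phi> \<in> E"
    "src (rep_class F Fe S' P \<phi>) = Inr (rep_class F F2 S' P \<phi>)"
    "tgt (rep_class F Fe S' P \<phi>) = Inl (rep_class F F1 S P \<phi>)"
proof -
  let ?c = "rep_class F Fe S' P \<phi>"
  show c: "?c \<in> E" using assms unfolding RepLam_E_def Rep_fs_def by (rule imageI)
  from edge_rep(1)[OF c] have r: "rep_rel Fe P \<phi> (edge_rep ?c)" unfolding rep_class_def by simp
  have ext: "\<phi> \<in> extensional P" using assms F_morphismD(1) unfolding Hom_fs_def by blast
  show "src ?c = Inr (rep_class F F2 S' P \<phi>)" unfolding src_eq
    using rep_class_eq[OF F2_fs rep_rel_mono[OF Fe_le_F2 r] ext] by simp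
  show "tgt ?c = Inl (rep_class F F1 S P \<phi>)" unfolding tgt_eq
    using rep_class_eq[OF F1_fs rep_rel_mono[OF Fe_le_F1 r] ext] by simp
qed

definition linked :: "('a \<Rightarrow> 'a) \<Rightarrow> ('a \<Rightarrow> 'a) \<Rightarrow> bool" where
  "linked \<phi> \<psi> \<longleftrightarrow>
     (Inl (rep_class F F1 S P \<phi>), Inl (rep_class F F1 S P \<psi>)) \<in> (graph_adj E src tgt)\<^sup>*"

lemma linked_sym: "linked \<phi> \<psi> \<Longrightarrow> linked \<psi> \<phi>"
  unfolding linked_def using sym_graph_adj_rtrancl by (metis symD)

lemma linked_trans: "linked \<phi> \<psi> \<Longrightarrow> linked \<psi> \<chi> \<Longrightarrow> linked \<phi> \<chi>"
  unfolding linked_def by (rule rtrancl_trans)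

definition linking_morphisms :: "('a set \<times> ('a \<Rightarrow> 'a)) set" where
  "linking_morphisms =
     {(Q, \<chi>) \<in> F. \<forall>\<phi>. (P, \<phi>) \<in> F \<and> \<phi> ` P \<subseteq> Q \<longrightarrow> linked \<phi> (compose P \<chi> \<phi>)}"

lemma F1_le_linking_morphisms: "F1 \<subseteq> linking_morphisms"
proof clarify
  fix Q \<chi> assume \<chi>: "(Q, \<chi>) \<in> F1"
  have "linked \<phi> (compose P \<chi> \<phi>)" if \<phi>: "(P, \<phi>) \<in> F" "\<phi> ` P \<subseteq> Q" for \<phi>
  proof -
    have "rep_rel F1 P \<phi> (compose P \<chi> \<phi>)"
      using rep_rel_postcompose[OF F1_fs group S_sub \<chi> \<phi>(2) F_morphismD(2)[OF \<phi>(1)]] .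
    then show ?thesis
      unfolding linked_def using rep_class_eq[OF F1_fs _ F_morphismD(1)[OF \<phi>(1)]] by simp
  qed
  with \<chi> F1_le_F show "(Q, \<chi>) \<in> linking_morphisms" unfolding linking_morphisms_def by auto
qed

lemma F2_le_linking_morphisms: "F2 \<subseteq> linking_morphisms"
proof clarify
  fix Q \<chi> assume \<chi>: "(Q, \<chi>) \<in> F2"
  have "linked \<phi> (compose P \<chi> \<phi>)" if \<phi>: "(P, \<phi>) \<in> F" "\<phi> ` P \<subseteq> Q" for \<phi>
  proof -
    let ?\<psi> = "compose P \<chi> \<phi>"
    have "Q \<subseteq> S'" "\<chi> ` Q \<subseteq> S'" using fusion_systemD(2,4)[OF F2_fs \<chi>] by simp_all
    moreover have "(P, ?\<psi>) \<in> F" using fusion_system_compose[OF F_fs \<phi>(1) _ \<phi>(2)] \<chi> F2_le_F by blast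
    ultimately have \<phi>_Hom: "\<phi> \<in> Hom_fs F P S'" and \<psi>_Hom: "?\<psi> \<in> Hom_fs F P S'"
      using \<phi> unfolding Hom_fs_def by (auto simp: compose_eq image_subset_iff)
    have "rep_rel F2 P \<phi> ?\<psi>"
      using rep_rel_postcompose[OF F2_fs group S'_sub \<chi> \<phi>(2) F_morphismD(2)[OF \<phi>(1)]] .
    then have same_F2: "rep_class F F2 S' P \<phi> = rep_class F F2 S' P ?\<psi>"
      using rep_class_eq[OF F2_fs _ F_morphismD(1)[OF \<phi>(1)]] by simp
    note e\<phi> = edge_ends[OF \<phi>_Hom] and e\<psi> = edge_ends[OF \<psi>_Hom]
    have "(Inl (rep_class F F1 S P \<phi>), Inr (rep_class F F2 S' P \<phi>)) \<in> graph_adj E src tgt"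
      using graph_adjI(2)[where src = src and tgt = tgt, OF e\<phi>(1)] unfolding e\<phi>(2,3) .
    moreover have "(Inr (rep_class F F2 S' P \<phi>), Inl (rep_class F F1 S P ?\<psi>)) \<in> graph_adj E src tgt"
      using graph_adjI(1)[where src = src and tgt = tgt, OF e\<psi>(1)] unfolding e\<psi>(2,3) same_F2 .
    ultimately show ?thesis
      unfolding linked_def by (meson converse_rtrancl_into_rtrancl r_into_rtrancl)
  qed
  with \<chi> F2_le_F show "(Q, \<chi>) \<in> linking_morphisms" unfolding linking_morphisms_def by auto
qed

lemma linking_morphisms_compose:
  assumes \<chi>: "(Q, \<chi>) \<in> linking_morphisms" and \<omega>: "(R, \<omega>) \<in> linking_morphisms"
    and "\<chi> ` Q \<subseteq> R"
  shows "(Q, compose Q \<omega> \<chi>) \<in> linking_morphisms"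
proof -
  have "(Q, \<chi>) \<in> F" "(R, \<omega>) \<in> F" using \<chi> \<omega> unfolding linking_morphisms_def by auto
  have "linked \<phi> (compose P (compose Q \<omega> \<chi>) \<phi>)" if \<phi>: "(P, \<phi>) \<in> F" "\<phi> ` P \<subseteq> Q" for \<phi>
  proof -
    let ?\<alpha> = "compose P \<chi> \<phi>"
    have "(P, ?\<alpha>) \<in> F" "?\<alpha> ` P \<subseteq> R"
      using fusion_system_compose[OF F_fs \<phi>(1) \<open>(Q, \<chi>) \<in> F\<close> \<phi>(2)] assms(3) \<phi>(2)
      by (auto simp: compose_eq)
    then have "linked \<phi> ?\<alpha>" "linked ?\<alpha> (compose P \<omega> ?\<alpha>)"
      using \<chi> \<omega> \<phi> unfolding linking_morphisms_def by auto
    moreover have "compose P \<omega> ?\<alpha> = compose P (compose Q \<omega> \<chi>) \<phi>"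
      using \<phi>(2) by (auto simp: fun_eq_iff compose_def)
    ultimately show ?thesis using linked_trans by simp
  qed
  then show ?thesis
    using fusion_system_compose[OF F_fs \<open>(Q, \<chi>) \<in> F\<close> \<open>(R, \<omega>) \<in> F\<close> assms(3)]
    unfolding linking_morphisms_def by auto
qed

lemma linking_morphisms_inv:
  assumes \<chi>: "(Q, \<chi>) \<in> linking_morphisms"
  shows "(\<chi> ` Q, restrict (inv_into Q \<chi>) (\<chi> ` Q)) \<in> linking_morphisms"
proof -
  let ?\<chi>' = "restrict (inv_into Q \<chi>) (\<chi> ` Q)"
  have "(Q, \<chi>) \<in> F" using \<chi> unfolding linking_morphisms_def by auto
  then have inv: "(\<chi> ` Q, ?\<chi>') \<in> F" by (rule fusion_system_inv[OF F_fs])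
  have "linked \<phi> (compose P ?\<chi>' \<phi>)" if \<phi>: "(P, \<phi>) \<in> F" "\<phi> ` P \<subseteq> \<chi> ` Q" for \<phi>
  proof -
    let ?\<alpha> = "compose P ?\<chi>' \<phi>"
    have "(P, ?\<alpha>) \<in> F" "?\<alpha> ` P \<subseteq> Q"
      using fusion_system_compose[OF F_fs \<phi>(1) inv \<phi>(2)] \<phi>(2)
      by (auto simp: compose_eq inv_into_into)
    then have "linked ?\<alpha> (compose P \<chi> ?\<alpha>)" using \<chi> unfolding linking_morphisms_def by auto
    moreover have "compose P \<chi> ?\<alpha> = \<phi>"
      using \<phi>(2) F_morphismD(1)[OF \<phi>(1)]
      by (auto simp: fun_eq_iff compose_def extensional_def f_inv_into_f image_subset_iff)
    ultimately show ?thesis using linked_sym by simp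
  qed
  with inv show ?thesis unfolding linking_morphisms_def by auto
qed

lemma fusion_system_linking_morphisms: "fusion_system G S linking_morphisms"
  unfolding fusion_system_def[of G S linking_morphisms]
proof (intro conjI allI impI ballI)
  fix x assume "x \<in> linking_morphisms"
  then obtain Q \<chi> where "x = (Q, \<chi>)" "(Q, \<chi>) \<in> F" unfolding linking_morphisms_def by blast
  with fusion_systemD[OF F_fs \<open>(Q, \<chi>) \<in> F\<close>]
  show "case x of (Q, \<chi>) \<Rightarrow> subgroup Q G \<and> Q \<subseteq> S \<and> \<chi> \<in> hom (G\<lparr>carrier := Q\<rparr>) G
          \<and> \<chi> ` Q \<subseteq> S \<and> inj_on \<chi> Q \<and> \<chi> \<in> extensional Q" by simp
next
  fix Q s assume "subgroup Q G \<and> Q \<subseteq> S \<and> s \<in> S"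
  then show "(Q, conjmap G s Q) \<in> linking_morphisms"
    using fusion_system_conjmap[OF F1_fs] F1_le_linking_morphisms by blast
qed (auto intro: linking_morphisms_compose linking_morphisms_inv)

lemma linked_idP: "(P, \<phi>) \<in> F \<Longrightarrow> linked idP \<phi>"
proof -
  assume \<phi>: "(P, \<phi>) \<in> F"
  have "F \<subseteq> linking_morphisms"
    using fusion_gen_least[OF fusion_system_linking_morphisms F1_le_linking_morphisms
        F2_le_linking_morphisms] .
  with \<phi> idP_in_F have "linked idP (compose P \<phi> idP)" unfolding linking_morphisms_def by auto
  moreover have "compose P \<phi> idP = \<phi>"
    using F_morphismD(1)[OF \<phi>] by (auto simp: fun_eq_iff compose_def extensional_def)
  ultimately show ?thesis by simp
qed

lemma connected: "graph_connected V E src tgt"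
proof (rule graph_connectedI)
  have "idP \<in> Hom_fs F P S" using idP_in_F P_le unfolding Hom_fs_def by auto
  then show root: "Inl (rep_class F F1 S P idP) \<in> V" unfolding RepLam_V_def Rep_fs_def by blast
  fix v assume "v \<in> V"
  then consider (F1) \<phi> where "\<phi> \<in> Hom_fs F P S" "v = Inl (rep_class F F1 S P \<phi>)"
    | (F2) \<phi> where "\<phi> \<in> Hom_fs F P S'" "v = Inr (rep_class F F2 S' P \<phi>)"
    unfolding RepLam_V_def Rep_fs_def by blast
  then show "(Inl (rep_class F F1 S P idP), v) \<in> (graph_adj E src tgt)\<^sup>*"
  proof cases
    case F1
    then show ?thesis using linked_idP unfolding linked_def Hom_fs_def by auto
  next
    case F2
    note e = edge_ends[OF F2(1)]
    have "linked idP \<phi>" using linked_idP F2(1) unfolding Hom_fs_def by auto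
    moreover have "(Inl (rep_class F F1 S P \<phi>), v) \<in> graph_adj E src tgt"
      using graph_adjI(2)[where src = src and tgt = tgt, OF e(1)] unfolding e(2,3) F2(2) .
    ultimately show ?thesis unfolding linked_def by (rule rtrancl_into_rtrancl)
  qed
qed

lemma finite_E: "finite E"
proof -
  have "Hom_fs F P S' \<subseteq> PiE P (\<lambda>_. S)"
  proof
    fix \<phi> assume "\<phi> \<in> Hom_fs F P S'"
    then have "(P, \<phi>) \<in> F" "\<phi> ` P \<subseteq> S" using S'_le unfolding Hom_fs_def by auto
    then show "\<phi> \<in> PiE P (\<lambda>_. S)" using F_morphismD(1) by (auto simp: PiE_iff)
  qed
  moreover have "finite (PiE P (\<lambda>_. S))"
    using S_fin finite_subset[OF P_le S_fin] by (intro finite_PiE)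
  ultimately show ?thesis
    unfolding RepLam_E_def Rep_fs_def by (meson finite_imageI finite_subset)
qed

lemma ends_in_V:
  assumes "c \<in> E"
  shows "src c \<in> V \<and> tgt c \<in> V"
proof -
  have "edge_rep c \<in> Hom_fs F P S'" "edge_rep c \<in> Hom_fs F P S"
    using edge_rep(2)[OF assms] S'_le unfolding Hom_fs_def by auto
  then show ?thesis unfolding src_eq tgt_eq RepLam_V_def Rep_fs_def by blast
qed

lemma src_ne_tgt: "src c \<noteq> tgt c'"
  unfolding src_eq tgt_eq by simp

lemma edge_eq_if_rep_rel:
  assumes "c \<in> E" "c' \<in> E" "rep_rel Fe P (edge_rep c) (edge_rep c')"
  shows "c = c'"
proof -
  have "(P, edge_rep c) \<in> F" using edge_rep(2)[OF assms(1)] unfolding Hom_fs_def by simp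
  then have "rep_class F Fe S' P (edge_rep c) = rep_class F Fe S' P (edge_rep c')"
    using rep_class_eq[OF Fe_fs assms(3)] F_morphismD(1) by blast
  then show ?thesis using edge_rep(3)[OF assms(1)] edge_rep(3)[OF assms(2)] by simp
qed

lemma rep_rel_F2_if_same_src:
  assumes "c \<in> E" "c' \<in> E" "src c = src c'"
  shows "rep_rel F2 P (edge_rep c) (edge_rep c')"
proof (rule rep_rel_if_rep_class_eq)
  show "edge_rep c' \<in> Hom_fs F P S'" using edge_rep(2)[OF assms(2)] .
  then show "rep_rel F2 P (edge_rep c') (edge_rep c')"
    using rep_rel_refl[OF F2_fs group S'_sub] F_morphismD unfolding Hom_fs_def by blast
  show "rep_class F F2 S' P (edge_rep c) = rep_class F F2 S' P (edge_rep c')"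
    using assms(3) unfolding src_eq by simp
qed

lemma rep_rel_F1_if_same_tgt:
  assumes "c \<in> E" "c' \<in> E" "tgt c = tgt c'"
  shows "rep_rel F1 P (edge_rep c) (edge_rep c')"
proof (rule rep_rel_if_rep_class_eq)
  show "edge_rep c' \<in> Hom_fs F P S"
    using edge_rep(2)[OF assms(2)] S'_le unfolding Hom_fs_def by blast
  then show "rep_rel F1 P (edge_rep c') (edge_rep c')"
    using rep_rel_refl[OF F1_fs group S_sub] F_morphismD unfolding Hom_fs_def by blast
  show "rep_class F F1 S P (edge_rep c) = rep_class F F1 S P (edge_rep c')"
    using assms(3) unfolding tgt_eq by simp
qed

lemma edge_eqI:
  assumes hyp_e: "\<forall>Q. fs_conj F P Q \<longrightarrow> Hom_fs Fe Q S' = Hom_fs F1 Q S' \<inter> Hom_fs F2 Q S'"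
    and c: "c \<in> E" and c': "c' \<in> E" and "src c = src c'" "tgt c = tgt c'"
  shows "c = c'"
proof -
  let ?\<psi> = "edge_rep c" and ?\<psi>' = "edge_rep c'"
  obtain \<theta>1 where \<theta>1: "(?\<psi> ` P, \<theta>1) \<in> F1" "\<theta>1 ` ?\<psi> ` P = ?\<psi>' ` P" "compose P \<theta>1 ?\<psi> = ?\<psi>'"
    using rep_rel_F1_if_same_tgt[OF c c' assms(5)] unfolding rep_rel_def by blast
  obtain \<theta>2 where \<theta>2: "(?\<psi> ` P, \<theta>2) \<in> F2" "compose P \<theta>2 ?\<psi> = ?\<psi>'"
    using rep_rel_F2_if_same_src[OF c c' assms(4)] unfolding rep_rel_def by blast
  have "\<theta>1 = \<theta>2"
    by (rule extensional_compose_cancel[OF fusion_systemD(6)[OF F1_fs \<theta>1(1)]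
          fusion_systemD(6)[OF F2_fs \<theta>2(1)]]) (simp add: \<theta>1(3) \<theta>2(2))
  have "(P, ?\<psi>) \<in> F" using edge_rep(2)[OF c] unfolding Hom_fs_def by simp
  then have "Hom_fs Fe (?\<psi> ` P) S' = Hom_fs F1 (?\<psi> ` P) S' \<inter> Hom_fs F2 (?\<psi> ` P) S'"
    using hyp_e unfolding fs_conj_def by blast
  moreover have "?\<psi>' ` P \<subseteq> S'" using edge_rep(2)[OF c'] unfolding Hom_fs_def by simp
  then have "\<theta>1 \<in> Hom_fs F1 (?\<psi> ` P) S' \<inter> Hom_fs F2 (?\<psi> ` P) S'"
    using \<theta>1 \<theta>2(1) \<open>\<theta>1 = \<theta>2\<close> unfolding Hom_fs_def by simp
  ultimately have "(?\<psi> ` P, \<theta>1) \<in> Fe" unfolding Hom_fs_def by blast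
  with \<theta>1 have "rep_rel Fe P ?\<psi> ?\<psi>'" unfolding rep_rel_def by blast
  then show ?thesis using edge_eq_if_rep_rel[OF c c'] by simp
qed

lemma tgt_eq_idP_class:
  assumes "(P, edge_rep c) \<in> F1"
  shows "tgt c = Inl (rep_class F F1 S P idP)"
  using rep_class_eq[OF F1_fs rep_rel_id[OF F1_fs assms]] unfolding tgt_eq by simp

lemma src_eq_idP_class:
  assumes "(P, edge_rep c) \<in> F2"
  shows "src c = Inr (rep_class F F2 S' P idP)"
  using rep_class_eq[OF F2_fs rep_rel_id[OF F2_fs assms]] unfolding src_eq by simp

lemma leaf_edge_if_Hom_Fe_eq_Hom_F2:
  assumes c: "c \<in> E" and Fe_F2: "Hom_fs Fe (edge_rep c ` P) S' = Hom_fs F2 (edge_rep c ` P) S'"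
  shows "leaf_edge E src tgt c"
  unfolding leaf_edge_def
proof (intro bexI ballI impI)
  fix c' assume c': "c' \<in> E" and "src c \<in> {src c', tgt c'}"
  then have "src c = src c'" using src_ne_tgt by auto
  then obtain \<theta> where \<theta>: "(edge_rep c ` P, \<theta>) \<in> F2" "\<theta> ` edge_rep c ` P = edge_rep c' ` P"
      "compose P \<theta> (edge_rep c) = edge_rep c'"
    using rep_rel_F2_if_same_src[OF c c'] unfolding rep_rel_def by blast
  moreover have "edge_rep c' ` P \<subseteq> S'" using edge_rep(2)[OF c'] unfolding Hom_fs_def by simp
  ultimately have "\<theta> \<in> Hom_fs F2 (edge_rep c ` P) S'" unfolding Hom_fs_def by simp
  then have "(edge_rep c ` P, \<theta>) \<in> Fe" using Fe_F2 unfolding Hom_fs_def by blast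
  with \<theta> have "rep_rel Fe P (edge_rep c) (edge_rep c')" unfolding rep_rel_def by blast
  then show "c' = c" using edge_eq_if_rep_rel[OF c c'] by simp
qed simp

lemma edge_rep_in_F2_if_Fe_conj:
  assumes c: "c \<in> E" and Aut: "Aut_fs F P = Aut_fs F2 P" and conj: "fs_conj Fe P (edge_rep c ` P)"
  shows "(P, edge_rep c) \<in> F2"
proof -
  let ?\<psi> = "edge_rep c"
  have \<psi>F: "(P, ?\<psi>) \<in> F" using edge_rep(2)[OF c] unfolding Hom_fs_def by simp
  obtain \<beta> where \<beta>: "(P, \<beta>) \<in> Fe" "\<beta> ` P = ?\<psi> ` P" using conj unfolding fs_conj_def by blast
  have inj: "inj_on \<beta> P" using fusion_systemD(5)[OF Fe_fs \<beta>(1)] .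
  let ?\<beta>' = "restrict (inv_into P \<beta>) (?\<psi> ` P)"
  let ?\<alpha> = "compose P ?\<beta>' ?\<psi>"
  have "(?\<psi> ` P, ?\<beta>') \<in> F"
    using fusion_system_inv[OF Fe_fs \<beta>(1)] \<beta>(2) Fe_le_F1 F1_le_F by auto
  then have "(P, ?\<alpha>) \<in> F" using fusion_system_compose[OF F_fs \<psi>F] by simp
  moreover have "?\<alpha> ` P = inv_into P \<beta> ` \<beta> ` P"
    unfolding \<beta>(2) by (simp add: compose_eq image_image cong: image_cong)
  then have "?\<alpha> ` P = P" using inv_into_image_cancel[OF inj order_refl] by simp
  ultimately have "(P, ?\<alpha>) \<in> F2" using Aut unfolding Aut_fs_def by blast
  moreover have "(P, \<beta>) \<in> F2" using \<beta>(1) Fe_le_F2 by blast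
  ultimately have "(P, compose P \<beta> ?\<alpha>) \<in> F2"
    using fusion_system_compose[OF F2_fs] \<open>?\<alpha> ` P = P\<close> by simp
  moreover have "compose P \<beta> ?\<alpha> = ?\<psi>"
    using \<beta>(2) F_morphismD(1)[OF \<psi>F]
    by (auto simp: fun_eq_iff compose_def extensional_def f_inv_into_f)
  ultimately show ?thesis by simp
qed

lemma hub_exists:
  assumes "(\<exists>H \<in> {F1, F2}. Hom_fs F P S' = Hom_fs H P S')
           \<or> (Aut_fs F P = Aut_fs F2 P \<and>
              (\<forall>Q. fs_conj F P Q \<and> \<not> fs_conj Fe P Q \<longrightarrow> Hom_fs Fe Q S' = Hom_fs F2 Q S'))"
  shows "\<exists>h. \<forall>c \<in> E. h \<in> {src c, tgt c} \<or> leaf_edge E src tgt c"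
proof -
  have in_F: "(P, edge_rep c) \<in> F" "edge_rep c \<in> Hom_fs F P S'" if "c \<in> E" for c
    using edge_rep(2)[OF that] unfolding Hom_fs_def by simp_all
  consider "Hom_fs F P S' = Hom_fs F1 P S'" | "Hom_fs F P S' = Hom_fs F2 P S'"
    | "Aut_fs F P = Aut_fs F2 P"
      "\<forall>Q. fs_conj F P Q \<and> \<not> fs_conj Fe P Q \<longrightarrow> Hom_fs Fe Q S' = Hom_fs F2 Q S'"
    using assms by blast
  then show ?thesis
  proof cases
    case 1
    have "Inl (rep_class F F1 S P idP) \<in> {src c, tgt c}" if "c \<in> E" for c
    proof -
      have "(P, edge_rep c) \<in> F1" using in_F(2)[OF that] 1 unfolding Hom_fs_def by simp
      then show ?thesis using tgt_eq_idP_class by simp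
    qed
    then show ?thesis by blast
  next
    case 2
    have "Inr (rep_class F F2 S' P idP) \<in> {src c, tgt c}" if "c \<in> E" for c
    proof -
      have "(P, edge_rep c) \<in> F2" using in_F(2)[OF that] 2 unfolding Hom_fs_def by simp
      then show ?thesis using src_eq_idP_class by simp
    qed
    then show ?thesis by blast
  next
    case 3
    have "Inr (rep_class F F2 S' P idP) \<in> {src c, tgt c} \<or> leaf_edge E src tgt c"
      if c: "c \<in> E" for c
    proof (cases "fs_conj Fe P (edge_rep c ` P)")
      case True
      then show ?thesis using src_eq_idP_class edge_rep_in_F2_if_Fe_conj[OF c 3(1)] by simp
    next
      case False
      moreover have "fs_conj F P (edge_rep c ` P)"
        using in_F(1)[OF c] unfolding fs_conj_def by blast
      ultimately show ?thesis using leaf_edge_if_Hom_Fe_eq_Hom_F2[OF c] 3(2) by simp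
    qed
    then show ?thesis by blast
  qed
qed

lemma hub_graph_exists:
  assumes "\<forall>Q. fs_conj F P Q \<longrightarrow> Hom_fs Fe Q S' = Hom_fs F1 Q S' \<inter> Hom_fs F2 Q S'"
    and "(\<exists>H \<in> {F1, F2}. Hom_fs F P S' = Hom_fs H P S')
         \<or> (Aut_fs F P = Aut_fs F2 P \<and>
            (\<forall>Q. fs_conj F P Q \<and> \<not> fs_conj Fe P Q \<longrightarrow> Hom_fs Fe Q S' = Hom_fs F2 Q S'))"
  shows "\<exists>h. hub_graph V E src tgt h"
proof -
  obtain h where "\<forall>c \<in> E. h \<in> {src c, tgt c} \<or> leaf_edge E src tgt c"
    using hub_exists[OF assms(2)] by blast
  then have "hub_graph V E src tgt h"
    by unfold_locales (use finite_E ends_in_V src_ne_tgt edge_eqI[OF assms(1)] in auto)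
  then show ?thesis by blast
qed

end

theorem lemma4p1:
  fixes G :: "('a, 'b) monoid_scheme"
    and p :: nat
    and S S' P :: "'a set"
    and F1 F2 Fe :: "('a set \<times> ('a \<Rightarrow> 'a)) set"
    and C :: "'a set set"
  assumes grp: "group G"
    and p_prime: "prime p"
    and S_sub: "subgroup S G" and S_fin: "finite S" and S_pgrp: "\<exists>n. card S = p ^ n"
    and S'_sub: "subgroup S' G" and S'_le: "S' \<subseteq> S"
    and F1_fs: "fusion_system G S F1"
    and F2_fs: "fusion_system G S' F2"
    and Fe_fs: "fusion_system G S' Fe"
    and Fe_le: "Fe \<subseteq> F1 \<inter> F2"
    and C_sub: "\<forall>Q\<in>C. subgroup Q G \<and> Q \<subseteq> S"
    and S'_C: "S' \<in> C"
    and C_conj: "\<forall>Q\<in>C. \<forall>R. fs_conj (fusion_gen G S F1 F2) Q R \<longrightarrow> R \<in> C"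
    and C_over: "\<forall>Q\<in>C. \<forall>R. subgroup R G \<and> Q \<subseteq> R \<and> R \<subseteq> S \<longrightarrow> R \<in> C"
    and P_C: "P \<in> C"
    and hyp_e: "\<forall>Q. fs_conj (fusion_gen G S F1 F2) P Q \<longrightarrow>
                   Hom_fs Fe Q S' = Hom_fs F1 Q S' \<inter> Hom_fs F2 Q S'"
    and hyp_12: "(\<exists>H \<in> {F1, F2}. Hom_fs (fusion_gen G S F1 F2) P S' = Hom_fs H P S')
               \<or> (Aut_fs (fusion_gen G S F1 F2) P = Aut_fs F2 P \<and>
                  (\<forall>Q. fs_conj (fusion_gen G S F1 F2) P Q \<and> \<not> fs_conj Fe P Q \<longrightarrow>
                       Hom_fs Fe Q S' = Hom_fs F2 Q S'))"
  shows "graph_is_tree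
           (RepLam_V (fusion_gen G S F1 F2) F1 F2 S S' P)
           (RepLam_E (fusion_gen G S F1 F2) Fe S' P)
           (RepLam_src (fusion_gen G S F1 F2) F2 S' P)
           (RepLam_tgt (fusion_gen G S F1 F2) F1 S P)
       \<and> graph_H1_zero
           (RepLam_V (fusion_gen G S F1 F2) F1 F2 S S' P)
           (RepLam_E (fusion_gen G S F1 F2) Fe S' P)
           (RepLam_src (fusion_gen G S F1 F2) F2 S' P)
           (RepLam_tgt (fusion_gen G S F1 F2) F1 S P)
           TYPE('r::comm_ring_1)"
proof -
  have P_sub: "subgroup P G" and P_le: "P \<subseteq> S" using C_sub P_C by auto
  interpret amalgam G S S' P F1 F2 Fe
    by (rule amalgam.intro) (fact grp S_sub S_fin S'_sub S'_le F1_fs F2_fs Fe_fs Fe_le P_sub P_le)+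
  obtain h where h: "hub_graph V E src tgt h" using hub_graph_exists[OF hyp_e hyp_12] by blast
  have "\<not> graph_has_cycle V E src tgt" using h by (rule hub_graph.no_cycle)
  moreover have "graph_Z1 V E src tgt = {\<lambda>e. 0 :: 'r}" using h by (rule hub_graph.Z1_trivial)
  ultimately show ?thesis
    using connected unfolding graph_is_tree_def graph_H1_zero_def by simp
qed

end
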